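(* Let $1\le p\le2$, $A\in\mathbb{R}^{m\times n}$, let $\bar{x}\in\mathbb{R}^n$ have exactly $S\ge1$ nonzero groups, $b:=A\bar{x}$, and suppose the $(p,1)$-GREC$(S,S)$ holds. Let $\lambda>0$ and let $x^*$ be a global minimizer of $\|Ax-b\|_2^2+\lambda\|x\|_{p,1}$. Then $\|x^*-\bar{x}\|_2^2\le 2\lambda^2S/\phi_{p,1}^4(S,S)$; in particular $\|x^*-\bar{x}\|_2^2=O(\lambda^2S)$.
   Context: Group structure: $\{1,\dots,n\}$ is partitioned into disjoint nonempty index sets $\mathcal{G}_1,\dots,\mathcal{G}_r$; $x_{\mathcal{G}_i}$ is the subvector indexed by $\mathcal{G}_i$. For $\mathcal{J}\subseteq\{1,\dots,r\}$, $\|x_{\mathcal{G}_{\mathcal{J}}}\|_{p,q}:=(\sum_{i\in\mathcal{J}}\|x_{\mathcal{G}_i}\|_p^q)^{1/q}$ and $\|x\|_{p,q}:=\|x_{\mathcal{G}_{\{1,\dots,r\}}}\|_{p,q}$. For $\mathcal{J}\subseteq\{1,\dots,r\}$ and integer $N$, $\mathcal{J}(x;N)$ is the set of the $N$ indices $i\in\mathcal{J}^c$ with the largest $\|x_{\mathcal{G}_i}\|_p$ (ties broken arbitrarily). $\phi_{p,q}(S,N):=\inf\{\|Ax\|_2/\|x_{\mathcal{G}_{\mathcal{N}}}\|_{p,2}: x\ne0,\ |\mathcal{J}|\le S,\ \|x_{\mathcal{G}_{\mathcal{J}^c}}\|_{p,q}\le\|x_{\mathcal{G}_{\mathcal{J}}}\|_{p,q},\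 \mathcal{N}=\mathcal{J}(x;N)\cup\mathcal{J}\}$; the $(p,q)$-GREC$(S,N)$ holds if $\phi_{p,q}(S,N)>0$. *)

theory Defs
  imports "HOL-Analysis.Analysis"
begin

definition group_partition :: "(nat \<Rightarrow> 'n set) \<Rightarrow> nat \<Rightarrow> bool" where
  "group_partition G r \<longleftrightarrow>
     (\<forall>i\<in>{1..r}. G i \<noteq> {}) \<and>
     (\<forall>i\<in>{1..r}. \<forall>k\<in>{1..r}. i \<noteq> k \<longrightarrow> G i \<inter> G k = {}) \<and>
     (\<Union>i\<in>{1..r}. G i) = UNIV"

definition group_pnorm :: "real \<Rightarrow> (nat \<Rightarrow> 'n::finite set) \<Rightarrow> real^'n \<Rightarrow> nat \<Rightarrow> real" where
  "group_pnorm p G x i = (\<Sum>j\<in>G i. \<bar>x $ j\<bar> powr p) powr (1 / p)"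

definition mixed_norm :: "real \<Rightarrow> real \<Rightarrow> (nat \<Rightarrow> 'n::finite set) \<Rightarrow> nat set \<Rightarrow> real^'n \<Rightarrow> real" where
  "mixed_norm p q G J x = (\<Sum>i\<in>J. group_pnorm p G x i powr q) powr (1 / q)"

text \<open>T is an admissible choice of J(x;N): the N indices of J^c (or all of J^c if it has fewer
  than N elements) with the largest group norms, ties broken arbitrarily.\<close>
definition top_groups :: "real \<Rightarrow> (nat \<Rightarrow> 'n::finite set) \<Rightarrow> nat \<Rightarrow> nat set \<Rightarrow> real^'n \<Rightarrow> nat \<Rightarrow> nat set \<Rightarrow> bool" where
  "top_groups p G r J x N T \<longleftrightarrow>
     T \<subseteq> {1..r} - J \<and> card T = min N (card ({1..r} - J)) \<and>
     (\<forall>i\<in>T. \<forall>k\<in>({1..r} - J) - T. group_pnorm p G x k \<le> group_pnorm p G x i)"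

definition grec_phi :: "real^'n::finite^'m \<Rightarrow> real \<Rightarrow> real \<Rightarrow> (nat \<Rightarrow> 'n set) \<Rightarrow> nat \<Rightarrow> nat \<Rightarrow> nat \<Rightarrow> real" where
  "grec_phi A p q G r S N = Inf {norm (A *v x) / mixed_norm p 2 G Nset x | x J T Nset.
      x \<noteq> 0 \<and> J \<subseteq> {1..r} \<and> card J \<le> S \<and>
      mixed_norm p q G ({1..r} - J) x \<le> mixed_norm p q G J x \<and>
      top_groups p G r J x N T \<and> Nset = T \<union> J}"

definition grec :: "real^'n::finite^'m \<Rightarrow> real \<Rightarrow> real \<Rightarrow> (nat \<Rightarrow> 'n set) \<Rightarrow> nat \<Rightarrow> nat \<Rightarrow> nat \<Rightarrow> bool" where
  "grec A p q G r S N \<longleftrightarrow> grec_phi A p q G r S N > 0"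

definition nonzero_groups :: "(nat \<Rightarrow> 'n::finite set) \<Rightarrow> nat \<Rightarrow> real^'n \<Rightarrow> nat set" where
  "nonzero_groups G r x = {i\<in>{1..r}. \<exists>j\<in>G i. x $ j \<noteq> 0}"

end

theory Submission
  imports Defs
begin

text \<open>Let \<open>h = xstar - xbar\<close> and let \<open>J\<close> be the set of nonzero groups of \<open>xbar\<close>. Comparing the
  objective at \<open>xstar\<close> and at \<open>xbar\<close>, and using the triangle inequality on the groups in \<open>J\<close>,
  gives the basic inequality \<open>|A h|^2 + lambda |h_(J^c)|_(p,1) <= lambda |h_J|_(p,1)\<close>. Hence \<open>h\<close>
  lies in the cone of the GREC condition, and with \<open>N = J \<union> J(h;S)\<close>, \<open>D = |h_N|_(p,2)\<close>:
  \<open>phi^2 D^2 <= |A h|^2 <= lambda |h_J|_(p,1) <= lambda sqrt S D\<close>, so \<open>phi^4 D^2 <= lambda^2 S\<close>.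
  Each group outside \<open>N\<close> is at most the average of the \<open>S\<close> largest groups outside \<open>J\<close>; with the
  cone condition this bounds the squared contribution of those groups by \<open>D^2\<close>. Since
  \<open>|h|_2 <= |h|_(p,2)\<close> for \<open>p <= 2\<close>, we get \<open>|h|^2 <= 2 D^2 <= 2 lambda^2 S / phi^4\<close>.\<close>

definition lp_norm :: "real \<Rightarrow> 'a set \<Rightarrow> ('a \<Rightarrow> real) \<Rightarrow> real" where
  "lp_norm p K u = (\<Sum>j\<in>K. u j powr p) powr (1 / p)"

lemma lp_norm_nonneg: "lp_norm p K u \<ge> 0"
  unfolding lp_norm_def by simp

lemma lp_norm_powr:
  assumes "p > 0"
  shows "lp_norm p K u powr p = (\<Sum>j\<in>K. u j powr p)"
  using assms unfolding lp_norm_def by (simp add: powr_powr sum_nonneg)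

lemma lp_norm_eq_0_iff:
  assumes "finite K"
  shows "lp_norm p K u = 0 \<longleftrightarrow> (\<forall>j\<in>K. u j = 0)"
  using assms unfolding lp_norm_def by (simp add: sum_nonneg_eq_0_iff)

lemma member_le_lp_norm:
  assumes "finite K" "p > 0" "j \<in> K" "u j \<ge> 0"
  shows "u j \<le> lp_norm p K u"
proof -
  have "u j powr p \<le> lp_norm p K u powr p"
    unfolding lp_norm_powr[OF \<open>p > 0\<close>] using assms by (intro member_le_sum) auto
  show ?thesis
  proof (rule ccontr)
    assume "\<not> u j \<le> lp_norm p K u"
    then have "lp_norm p K u powr p < u j powr p"
      using assms lp_norm_nonneg[of p K u] by (intro powr_less_mono2) auto
    with \<open>u j powr p \<le> lp_norm p K u powr p\<close> show False by simp
  qed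
qed

lemma convex_on_powr_nonneg:
  assumes "p \<ge> 1"
  shows "convex_on {0..} (\<lambda>x::real. x powr p)"
proof (rule convex_on_linorderI)
  fix t x y :: real
  assume t: "0 < t" "t < 1" and xy: "x \<in> {0..}" "y \<in> {0..}" "x < y"
  show "((1 - t) *\<^sub>R x + t *\<^sub>R y) powr p \<le> (1 - t) * x powr p + t * y powr p"
  proof (cases "x = 0")
    case True
    have "(t * y) powr p = t powr p * y powr p"
      using t xy by (simp add: powr_mult)
    also have "\<dots> \<le> t * y powr p"
      using powr_mono'[of 1 p t] t assms by (intro mult_right_mono) auto
    finally show ?thesis using True assms by simp
  next
    case False
    with xy have "x \<in> {0<..}" "y \<in> {0<..}" by auto
    with convex_onD[OF powr_convex[OF assms]] t show ?thesis by simp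
  qed
qed simp

lemma sum_powr_divide_lp_norm:
  assumes "p > 0" "lp_norm p K u > 0"
  shows "(\<Sum>j\<in>K. (u j / lp_norm p K u) powr p) = 1"
proof -
  have "(\<Sum>j\<in>K. (u j / lp_norm p K u) powr p) = (\<Sum>j\<in>K. u j powr p) / lp_norm p K u powr p"
    using assms(2) by (simp add: powr_divide sum_divide_distrib)
  then show ?thesis
    using assms by (simp flip: lp_norm_powr)
qed

lemma powr_add_le_weighted:
  fixes a c x y :: real
  assumes p: "p \<ge> 1" and ac: "a > 0" "c > 0" and xy: "x \<ge> 0" "y \<ge> 0"
  shows "(x + y) powr p \<le> (a + c) powr p * (a / (a + c) * (x / a) powr p + c / (a + c) * (y / c) powr p)"
proof -
  define t where "t = c / (a + c)"
  have t: "0 \<le> t" "t \<le> 1" "1 - t = a / (a + c)"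
    using ac unfolding t_def by (auto simp: field_simps)
  have "(1 - t) * (x / a) + t * (y / c) = (x + y) / (a + c)"
    using ac unfolding t(3) t_def by (simp add: field_simps add_pos_pos less_imp_neq[symmetric])
  then have "x + y = (a + c) * ((1 - t) * (x / a) + t * (y / c))"
    using ac by simp
  then have "(x + y) powr p = (a + c) powr p * ((1 - t) * (x / a) + t * (y / c)) powr p"
    using ac t xy by (simp add: powr_mult)
  also have "\<dots> \<le> (a + c) powr p * ((1 - t) * (x / a) powr p + t * (y / c) powr p)"
    using convex_onD[OF convex_on_powr_nonneg[OF p], of t "x / a" "y / c"] ac t xy
    by (intro mult_left_mono) auto
  finally show ?thesis
    unfolding t(3) unfolding t_def .
qed

text \<open>Minkowski: with \<open>a, c\<close> the norms of \<open>u, v\<close>, \<open>u + v\<close> is \<open>a + c\<close> times a convex combination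
  of \<open>u/a\<close> and \<open>v/c\<close>, whose \<open>p\<close>-th powers both sum to 1.\<close>
lemma lp_norm_add_le:
  assumes K: "finite K" and p: "p \<ge> 1"
    and u: "\<And>j. j \<in> K \<Longrightarrow> u j \<ge> 0" and v: "\<And>j. j \<in> K \<Longrightarrow> v j \<ge> 0"
  shows "lp_norm p K (\<lambda>j. u j + v j) \<le> lp_norm p K u + lp_norm p K v"
proof -
  define a c where "a = lp_norm p K u" and "c = lp_norm p K v"
  consider "a = 0" | "c = 0" | "a > 0" "c > 0"
    using lp_norm_nonneg[of p K u] lp_norm_nonneg[of p K v] unfolding a_def c_def by argo
  then show ?thesis
  proof cases
    case 1
    then have "\<forall>j\<in>K. u j = 0"
      using lp_norm_eq_0_iff[OF K] unfolding a_def by blast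
    then show ?thesis
      using 1 unfolding a_def c_def lp_norm_def by simp
  next
    case 2
    then have "\<forall>j\<in>K. v j = 0"
      using lp_norm_eq_0_iff[OF K] unfolding c_def by blast
    then show ?thesis
      using 2 unfolding a_def c_def lp_norm_def by simp
  next
    case 3
    have "(\<Sum>j\<in>K. (u j + v j) powr p)
        \<le> (\<Sum>j\<in>K. (a + c) powr p * (a / (a + c) * (u j / a) powr p + c / (a + c) * (v j / c) powr p))"
      using 3 u v by (intro sum_mono powr_add_le_weighted[OF p]) auto
    also have "\<dots> = (a + c) powr p * (a / (a + c) * (\<Sum>j\<in>K. (u j / a) powr p)
                                     + c / (a + c) * (\<Sum>j\<in>K. (v j / c) powr p))"
      by (simp add: distrib_left sum.distrib sum_distrib_left)
    also have "\<dots> = (a + c) powr p"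
      using 3 p unfolding a_def c_def
      by (simp add: sum_powr_divide_lp_norm add_divide_distrib[symmetric])
    finally have "lp_norm p K (\<lambda>j. u j + v j) \<le> ((a + c) powr p) powr (1 / p)"
      unfolding lp_norm_def using p by (intro powr_mono2) (auto intro: sum_nonneg)
    also have "\<dots> = a + c"
      using 3 p by (simp add: powr_powr)
    finally show ?thesis unfolding a_def c_def .
  qed
qed

lemma sum_squares_le_lp_norm_squared:
  assumes K: "finite K" and p: "0 < p" "p \<le> 2" and u: "\<And>j. j \<in> K \<Longrightarrow> u j \<ge> 0"
  shows "(\<Sum>j\<in>K. (u j)\<^sup>2) \<le> (lp_norm p K u)\<^sup>2"
proof (cases "lp_norm p K u = 0")
  case True
  then show ?thesis using lp_norm_eq_0_iff[OF K] by simp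
next
  case False
  define a where "a = lp_norm p K u"
  have a: "a > 0" using False lp_norm_nonneg unfolding a_def by (metis less_eq_real_def)
  have "(\<Sum>j\<in>K. (u j)\<^sup>2) = a\<^sup>2 * (\<Sum>j\<in>K. (u j / a) powr 2)"
    using a u by (simp add: sum_distrib_left power_divide powr_divide field_simps)
  also have "\<dots> \<le> a\<^sup>2 * (\<Sum>j\<in>K. (u j / a) powr p)"
    using a u p member_le_lp_norm[OF K p(1)] unfolding a_def
    by (intro mult_left_mono sum_mono powr_mono') auto
  also have "\<dots> = a\<^sup>2"
    using a p unfolding a_def by (simp add: sum_powr_divide_lp_norm)
  finally show ?thesis unfolding a_def .
qed

lemma group_pnorm_eq_lp_norm: "group_pnorm p G x i = lp_norm p (G i) (\<lambda>j. \<bar>x $ j\<bar>)"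
  unfolding group_pnorm_def lp_norm_def ..

lemma group_pnorm_nonneg: "group_pnorm p G x i \<ge> 0"
  unfolding group_pnorm_def by simp

lemma group_pnorm_cong:
  assumes "\<And>j. j \<in> G i \<Longrightarrow> x $ j = y $ j"
  shows "group_pnorm p G x i = group_pnorm p G y i"
  unfolding group_pnorm_def using assms by simp

lemma group_pnorm_zero [simp]: "group_pnorm p G 0 i = 0"
  unfolding group_pnorm_def by simp

lemma group_pnorm_uminus [simp]: "group_pnorm p G (- x) i = group_pnorm p G x i"
  unfolding group_pnorm_def by simp

lemma group_pnorm_add_le:
  fixes x y :: "real^'n"
  assumes "p \<ge> 1"
  shows "group_pnorm p G (x + y) i \<le> group_pnorm p G x i + group_pnorm p G y i"
proof -
  have "group_pnorm p G (x + y) i \<le> lp_norm p (G i) (\<lambda>j. \<bar>x $ j\<bar> + \<bar>y $ j\<bar>)"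
    unfolding group_pnorm_def lp_norm_def using assms
    by (intro powr_mono2 sum_mono) (auto intro!: sum_nonneg abs_triangle_ineq)
  also have "\<dots> \<le> group_pnorm p G x i + group_pnorm p G y i"
    unfolding group_pnorm_eq_lp_norm by (rule lp_norm_add_le[OF finite assms]) auto
  finally show ?thesis .
qed

lemma mixed_norm_1_eq: "mixed_norm p 1 G J x = (\<Sum>i\<in>J. group_pnorm p G x i)"
  unfolding mixed_norm_def by (simp add: group_pnorm_nonneg sum_nonneg)

lemma mixed_norm_2_eq: "mixed_norm p 2 G J x = sqrt (\<Sum>i\<in>J. (group_pnorm p G x i)\<^sup>2)"
  unfolding mixed_norm_def by (simp add: group_pnorm_nonneg sum_nonneg powr_half_sqrt)

lemma mixed_norm_nonneg: "mixed_norm p q G J x \<ge> 0"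
  unfolding mixed_norm_def by simp

lemma mixed_norm_1_le_sqrt_card:
  "mixed_norm p 1 G J x \<le> sqrt (card J) * mixed_norm p 2 G J x"
proof -
  have "(\<Sum>i\<in>J. group_pnorm p G x i)\<^sup>2 \<le> card J * (\<Sum>i\<in>J. (group_pnorm p G x i)\<^sup>2)"
    using sum_squared_le_sum_of_squares[of "group_pnorm p G x" J] by (simp add: mult.commute)
  then show ?thesis
    unfolding mixed_norm_1_eq mixed_norm_2_eq real_sqrt_mult[symmetric] by (rule real_le_rsqrt)
qed

lemma mixed_norm_2_mono:
  assumes "J \<subseteq> N" "finite N"
  shows "mixed_norm p 2 G J x \<le> mixed_norm p 2 G N x"
  unfolding mixed_norm_2_eq using assms by (intro real_sqrt_le_mono sum_mono2) auto

lemma norm_le_mixed_norm_2: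
  fixes x :: "real^'n"
  assumes G: "group_partition G r" and p: "0 < p" "p \<le> 2"
  shows "norm x \<le> mixed_norm p 2 G {1..r} x"
proof -
  have "(norm x)\<^sup>2 = (\<Sum>j\<in>(\<Union>i\<in>{1..r}. G i). (x $ j)\<^sup>2)"
    using G unfolding group_partition_def norm_vec_def L2_set_def by (simp add: sum_nonneg)
  also have "\<dots> = (\<Sum>i\<in>{1..r}. \<Sum>j\<in>G i. \<bar>x $ j\<bar>\<^sup>2)"
    using G unfolding group_partition_def by (subst sum.UNION_disjoint) auto
  also have "\<dots> \<le> (\<Sum>i\<in>{1..r}. (group_pnorm p G x i)\<^sup>2)"
    unfolding group_pnorm_eq_lp_norm
    by (intro sum_mono sum_squares_le_lp_norm_squared[OF finite p]) auto
  finally show ?thesis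
    unfolding mixed_norm_2_eq by (simp add: real_le_rsqrt)
qed

lemma exists_top_subset:
  fixes f :: "'a \<Rightarrow> real"
  assumes "finite K" "n \<le> card K"
  shows "\<exists>T\<subseteq>K. card T = n \<and> (\<forall>i\<in>T. \<forall>k\<in>K - T. f k \<le> f i)"
  using assms(2)
proof (induction n)
  case 0
  then show ?case by auto
next
  case (Suc n)
  then obtain T where T: "T \<subseteq> K" "card T = n" "\<forall>i\<in>T. \<forall>k\<in>K - T. f k \<le> f i"
    by auto
  have fin: "finite (K - T)" and ne: "K - T \<noteq> {}"
    using T Suc.prems assms(1) by (auto dest: card_mono)
  have "Max (f ` (K - T)) \<in> f ` (K - T)"
    using fin ne by (intro Max_in) auto
  then obtain m where m: "m \<in> K - T" "f m = Max (f ` (K - T))"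
    by auto
  then have max: "\<forall>k\<in>K - T. f k \<le> f m"
    using fin by simp
  show ?case
  proof (intro exI[of _ "insert m T"] conjI)
    show "insert m T \<subseteq> K" "card (insert m T) = Suc n"
      using T m assms(1) by (auto simp: finite_subset)
    show "\<forall>i\<in>insert m T. \<forall>k\<in>K - insert m T. f k \<le> f i"
      using T(3) max by auto
  qed
qed

lemma top_groups_exists: "\<exists>T. top_groups p G r J x N T"
  using exists_top_subset[of "{1..r} - J" "min N (card ({1..r} - J))" "group_pnorm p G x"]
  unfolding top_groups_def by auto

text \<open>The tail \<open>R\<close> is dominated termwise by the average of \<open>g\<close> over the head \<open>T\<close>, so
  \<open>\<Sum>\<^sub>R g\<^sup>2 \<le> (\<Sum>\<^sub>T g) (\<Sum>\<^sub>R g) / |T| \<le> (\<Sum>\<^sub>T g) (\<Sum>\<^sub>J g) / |T|\<close>; conclude by AM-GM and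
  Cauchy-Schwarz.\<close>
lemma sum_squares_tail_le:
  fixes g :: "'a \<Rightarrow> real"
  assumes T: "finite T" "T \<noteq> {}" and J: "finite J" "card J \<le> card T"
    and g: "\<And>i. g i \<ge> 0"
    and top: "\<And>i k. i \<in> T \<Longrightarrow> k \<in> R \<Longrightarrow> g k \<le> g i"
    and tail: "(\<Sum>k\<in>R. g k) \<le> (\<Sum>i\<in>J. g i)"
  shows "(\<Sum>k\<in>R. (g k)\<^sup>2) \<le> ((\<Sum>i\<in>T. (g i)\<^sup>2) + (\<Sum>i\<in>J. (g i)\<^sup>2)) / 2"
proof -
  define n where "n = real (card T)"
  define a b where "a = (\<Sum>i\<in>T. g i)" and "b = (\<Sum>i\<in>J. g i)"
  have n: "n > 0" unfolding n_def using T by (simp add: card_gt_0_iff)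
  have a: "a \<ge> 0" unfolding a_def using g by (simp add: sum_nonneg)
  have below_mean: "g k \<le> a / n" if "k \<in> R" for k
  proof -
    have "n * g k = (\<Sum>i\<in>T. g k)" unfolding n_def by simp
    also have "\<dots> \<le> a" unfolding a_def using top that by (intro sum_mono) auto
    finally show ?thesis using n by (simp add: pos_le_divide_eq mult.commute)
  qed
  have "(\<Sum>k\<in>R. (g k)\<^sup>2) \<le> (\<Sum>k\<in>R. a / n * g k)"
    unfolding power2_eq_square using below_mean g by (intro sum_mono mult_right_mono) auto
  also have "\<dots> = a / n * (\<Sum>k\<in>R. g k)"
    by (rule sum_distrib_left[symmetric])
  also have "\<dots> \<le> a / n * b"
    unfolding b_def using tail a n by (intro mult_left_mono) auto
  also have "\<dots> \<le> (a\<^sup>2 + b\<^sup>2) / (2 * n)"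
    using n sum_squares_bound[of a b] by (simp add: field_simps)
  also have "\<dots> \<le> (n * (\<Sum>i\<in>T. (g i)\<^sup>2) + n * (\<Sum>i\<in>J. (g i)\<^sup>2)) / (2 * n)"
  proof -
    have "a\<^sup>2 \<le> n * (\<Sum>i\<in>T. (g i)\<^sup>2)"
      unfolding a_def n_def using sum_squared_le_sum_of_squares[of g T] by (simp add: mult.commute)
    moreover have "b\<^sup>2 \<le> n * (\<Sum>i\<in>J. (g i)\<^sup>2)"
    proof -
      have "b\<^sup>2 \<le> card J * (\<Sum>i\<in>J. (g i)\<^sup>2)"
        unfolding b_def using sum_squared_le_sum_of_squares[of g J] by (simp add: mult.commute)
      also have "\<dots> \<le> n * (\<Sum>i\<in>J. (g i)\<^sup>2)"
        unfolding n_def using J by (intro mult_right_mono) (auto intro: sum_nonneg)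
      finally show ?thesis .
    qed
    ultimately show ?thesis using n by (intro divide_right_mono) auto
  qed
  also have "\<dots> = ((\<Sum>i\<in>T. (g i)\<^sup>2) + (\<Sum>i\<in>J. (g i)\<^sup>2)) / 2"
    using n by (simp add: field_simps)
  finally show ?thesis .
qed

lemma norm_squared_le_head_in_cone:
  fixes x :: "real^'n"
  assumes G: "group_partition G r" and p: "0 < p" "p \<le> 2"
    and J: "J \<subseteq> {1..r}" "card J \<le> S" and S: "S \<ge> 1"
    and cone: "mixed_norm p 1 G ({1..r} - J) x \<le> mixed_norm p 1 G J x"
    and top: "top_groups p G r J x S T"
  shows "(norm x)\<^sup>2 \<le> 2 * (mixed_norm p 2 G (T \<union> J) x)\<^sup>2"
proof -
  define g where "g = group_pnorm p G x"
  define K where "K = {1..r} - J"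
  define R where "R = {1..r} - (T \<union> J)"
  have T: "T \<subseteq> K" "card T = min S (card K)" "\<forall>i\<in>T. \<forall>k\<in>K - T. g k \<le> g i"
    using top unfolding top_groups_def K_def g_def by auto
  have fin: "finite K" "finite J" "finite T"
    using J T(1) unfolding K_def by (auto intro: finite_subset)
  have disj: "T \<inter> J = {}"
    using T(1) unfolding K_def by auto
  have head: "(mixed_norm p 2 G (T \<union> J) x)\<^sup>2 = (\<Sum>i\<in>T. (g i)\<^sup>2) + (\<Sum>i\<in>J. (g i)\<^sup>2)"
    unfolding mixed_norm_2_eq g_def using fin disj by (simp add: sum_nonneg sum.union_disjoint)
  have tail: "(\<Sum>k\<in>R. (g k)\<^sup>2) \<le> (mixed_norm p 2 G (T \<union> J) x)\<^sup>2"
  proof (cases "card K \<le> S")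
    case True
    then have "T = K" using T fin by (simp add: card_subset_eq)
    then have "R = {}" unfolding R_def K_def by auto
    then show ?thesis by simp
  next
    case False
    then have "card T = S" using T(2) by simp
    then have "(\<Sum>k\<in>R. (g k)\<^sup>2) \<le> ((\<Sum>i\<in>T. (g i)\<^sup>2) + (\<Sum>i\<in>J. (g i)\<^sup>2)) / 2"
    proof (intro sum_squares_tail_le)
      have "(\<Sum>k\<in>R. g k) \<le> (\<Sum>k\<in>K. g k)"
        using fin unfolding R_def K_def g_def by (intro sum_mono2) (auto simp: group_pnorm_nonneg)
      also have "\<dots> \<le> (\<Sum>i\<in>J. g i)"
        using cone unfolding mixed_norm_1_eq K_def g_def .
      finally show "(\<Sum>k\<in>R. g k) \<le> (\<Sum>i\<in>J. g i)" .
    qed (use fin S J T R_def K_def g_def group_pnorm_nonneg in auto)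
    moreover have "(\<Sum>k\<in>R. (g k)\<^sup>2) \<ge> 0" by (simp add: sum_nonneg)
    ultimately show ?thesis unfolding head by simp
  qed
  have "(norm x)\<^sup>2 \<le> (mixed_norm p 2 G {1..r} x)\<^sup>2"
    using norm_le_mixed_norm_2[OF G p] by (simp add: power_mono)
  also have "\<dots> = (\<Sum>i\<in>{1..r}. (g i)\<^sup>2)"
    unfolding mixed_norm_2_eq g_def by (simp add: sum_nonneg)
  also have "\<dots> = (\<Sum>k\<in>R. (g k)\<^sup>2) + (\<Sum>i\<in>T \<union> J. (g i)\<^sup>2)"
    unfolding R_def using J T(1) unfolding K_def by (intro sum.subset_diff) auto
  also have "\<dots> = (\<Sum>k\<in>R. (g k)\<^sup>2) + (mixed_norm p 2 G (T \<union> J) x)\<^sup>2"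
    unfolding mixed_norm_2_eq g_def by (simp add: sum_nonneg)
  finally show ?thesis using tail by simp
qed

lemma lasso_basic_inequality:
  fixes A :: "real^'n^'m" and xbar xstar :: "real^'n"
  assumes p: "p \<ge> 1" and lambda: "lambda \<ge> 0" and J: "J \<subseteq> {1..r}"
    and support: "\<And>i j. i \<in> {1..r} - J \<Longrightarrow> j \<in> G i \<Longrightarrow> xbar $ j = 0"
    and optimal: "(norm (A *v xstar - A *v xbar))\<^sup>2 + lambda * mixed_norm p 1 G {1..r} xstar
                    \<le> lambda * mixed_norm p 1 G {1..r} xbar"
  shows "(norm (A *v (xstar - xbar)))\<^sup>2 + lambda * mixed_norm p 1 G ({1..r} - J) (xstar - xbar)
           \<le> lambda * mixed_norm p 1 G J (xstar - xbar)"
proof -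
  define h where "h = xstar - xbar"
  define K where "K = {1..r} - J"
  have split: "mixed_norm p 1 G {1..r} y = mixed_norm p 1 G J y + mixed_norm p 1 G K y" for y
    unfolding mixed_norm_1_eq K_def using J by (simp add: sum.subset_diff add.commute)
  have "mixed_norm p 1 G K xstar = mixed_norm p 1 G K h"
    unfolding mixed_norm_1_eq K_def h_def using support
    by (intro sum.cong refl group_pnorm_cong) auto
  moreover have "mixed_norm p 1 G K xbar = 0"
    unfolding mixed_norm_1_eq K_def using support
    by (simp add: group_pnorm_cong[of G _ xbar 0])
  moreover have "mixed_norm p 1 G J xbar \<le> mixed_norm p 1 G J xstar + mixed_norm p 1 G J h"
  proof -
    have "group_pnorm p G xbar i \<le> group_pnorm p G xstar i + group_pnorm p G h i" for i
      using group_pnorm_add_le[OF p, of G xstar "- h" i] unfolding group_pnorm_uminus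
      by (simp add: h_def)
    then show ?thesis
      unfolding mixed_norm_1_eq by (simp add: sum_mono flip: sum.distrib)
  qed
  ultimately have gain: "mixed_norm p 1 G {1..r} xbar - mixed_norm p 1 G {1..r} xstar
                     \<le> mixed_norm p 1 G J h - mixed_norm p 1 G K h"
    unfolding split by simp
  have "(norm (A *v h))\<^sup>2
      \<le> lambda * (mixed_norm p 1 G {1..r} xbar - mixed_norm p 1 G {1..r} xstar)"
    using optimal unfolding h_def matrix_vector_mult_diff_distrib by (simp add: right_diff_distrib)
  also have "\<dots> \<le> lambda * (mixed_norm p 1 G J h - mixed_norm p 1 G K h)"
    using gain lambda by (rule mult_left_mono)
  finally show ?thesis
    unfolding h_def K_def by (simp add: algebra_simps)
qed

lemma grec_phi_le:
  assumes "x \<noteq> 0" "J \<subseteq> {1..r}" "card J \<le> S"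
    and "mixed_norm p q G ({1..r} - J) x \<le> mixed_norm p q G J x"
    and "top_groups p G r J x N T"
  shows "grec_phi A p q G r S N \<le> norm (A *v x) / mixed_norm p 2 G (T \<union> J) x"
  unfolding grec_phi_def
  by (rule cInf_lower) (use assms in blast, auto intro!: bdd_belowI[of _ 0] simp: mixed_norm_nonneg)

lemma grec_head_bound:
  assumes grec: "grec A p 1 G r S S" and J: "J \<subseteq> {1..r}" "card J \<le> S"
    and cone: "mixed_norm p 1 G ({1..r} - J) h \<le> mixed_norm p 1 G J h"
    and top: "top_groups p G r J h S T" and lambda: "lambda \<ge> 0"
    and fit: "(norm (A *v h))\<^sup>2 \<le> lambda * mixed_norm p 1 G J h"
  shows "(grec_phi A p 1 G r S S)\<^sup>2 * mixed_norm p 2 G (T \<union> J) h \<le> lambda * sqrt S"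
proof -
  define phi D where "phi = grec_phi A p 1 G r S S" and "D = mixed_norm p 2 G (T \<union> J) h"
  have phi: "phi > 0" using grec unfolding grec_def phi_def .
  have "D \<ge> 0" unfolding D_def by (rule mixed_norm_nonneg)
  show ?thesis
  proof (cases "D = 0")
    case True
    then show ?thesis using lambda unfolding phi_def D_def by simp
  next
    case False
    with \<open>D \<ge> 0\<close> have D: "D > 0" "h \<noteq> 0"
      unfolding D_def by (auto simp: mixed_norm_2_eq)
    have "phi \<le> norm (A *v h) / D"
      unfolding phi_def D_def using J by (intro grec_phi_le[OF D(2) J(1) _ cone top]) simp
    then have "phi * D \<le> norm (A *v h)"
      using D by (simp add: pos_le_divide_eq)
    then have "(phi * D)\<^sup>2 \<le> (norm (A *v h))\<^sup>2"
      using phi D by (intro power_mono) auto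
    also have "\<dots> \<le> lambda * mixed_norm p 1 G J h"
      by (rule fit)
    also have "\<dots> \<le> lambda * (sqrt S * D)"
    proof -
      have "finite (T \<union> J)"
        using top J(1) unfolding top_groups_def by (auto intro: finite_subset)
      then have "mixed_norm p 2 G J h \<le> D"
        unfolding D_def by (intro mixed_norm_2_mono) auto
      have "mixed_norm p 1 G J h \<le> sqrt (card J) * mixed_norm p 2 G J h"
        by (rule mixed_norm_1_le_sqrt_card)
      also have "\<dots> \<le> sqrt S * D"
        using J(2) \<open>mixed_norm p 2 G J h \<le> D\<close> by (intro mult_mono) (auto simp: mixed_norm_nonneg)
      finally show ?thesis
        using lambda by (rule mult_left_mono)
    qed
    finally show ?thesis
      using D unfolding phi_def[symmetric] D_def[symmetric] by (simp add: power2_eq_square algebra_simps)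
  qed
qed

theorem corollary2p1:
  fixes A :: "real^'n^'m" and G :: "nat \<Rightarrow> 'n set" and r S :: nat
    and p lambda :: real and xbar xstar :: "real^'n" and b :: "real^'m"
  assumes "group_partition G r"
    and "1 \<le> p" and "p \<le> 2"
    and "S \<ge> 1" and "card (nonzero_groups G r xbar) = S"
    and "b = A *v xbar"
    and "grec A p 1 G r S S"
    and "lambda > 0"
    and "\<forall>x. (norm (A *v xstar - b))\<^sup>2 + lambda * mixed_norm p 1 G {1..r} xstar
             \<le> (norm (A *v x - b))\<^sup>2 + lambda * mixed_norm p 1 G {1..r} x"
  shows "(norm (xstar - xbar))\<^sup>2 \<le> 2 * lambda\<^sup>2 * real S / (grec_phi A p 1 G r S S) ^ 4"
proof -
  define h J phi where "h = xstar - xbar" and "J = nonzero_groups G r xbar"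
    and "phi = grec_phi A p 1 G r S S"
  have J: "J \<subseteq> {1..r}" "card J \<le> S" using assms(5) unfolding J_def nonzero_groups_def by auto
  have basic: "(norm (A *v h))\<^sup>2 + lambda * mixed_norm p 1 G ({1..r} - J) h
                 \<le> lambda * mixed_norm p 1 G J h"
    unfolding h_def using assms(2,8) J(1) spec[OF assms(9), of xbar]
    by (intro lasso_basic_inequality) (auto simp: J_def nonzero_groups_def assms(6))
  then have "lambda * mixed_norm p 1 G ({1..r} - J) h \<le> lambda * mixed_norm p 1 G J h"
    using zero_le_power2[of "norm (A *v h)"] by linarith
  then have cone: "mixed_norm p 1 G ({1..r} - J) h \<le> mixed_norm p 1 G J h"
    using assms(8) by simp
  have fit: "(norm (A *v h))\<^sup>2 \<le> lambda * mixed_norm p 1 G J h"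
    using basic mult_nonneg_nonneg[OF less_imp_le[OF assms(8)] mixed_norm_nonneg[of p 1 G "{1..r} - J" h]]
    by linarith
  obtain T where top: "top_groups p G r J h S T" using top_groups_exists by blast
  define D where "D = mixed_norm p 2 G (T \<union> J) h"
  have "(norm h)\<^sup>2 \<le> 2 * D\<^sup>2"
    unfolding D_def using assms(2) J
    by (intro norm_squared_le_head_in_cone[OF assms(1) _ assms(3) _ _ assms(4) cone top]) auto
  moreover have "(phi\<^sup>2 * D)\<^sup>2 \<le> (lambda * sqrt S)\<^sup>2"
    using grec_head_bound[OF assms(7) J cone top _ fit] assms(8) mixed_norm_nonneg[of p 2 G "T \<union> J" h]
    unfolding phi_def D_def by (intro power_mono) auto
  then have "D\<^sup>2 \<le> lambda\<^sup>2 * S / phi ^ 4"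
    using assms(7) unfolding grec_def phi_def
    by (simp add: pos_le_divide_eq power_mult_distrib mult.commute flip: power_mult)
  ultimately show ?thesis
    unfolding h_def phi_def by simp
qed

end
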